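(* Let $\mathcal{T}\mathcal{E}$ be the tangent equation of $u_{tx}=2u_yu_{xx}+4u_xu_{xy}-u_{xxxy}$, i.e. the system consisting of this equation together with $q_{tx}=2u_yq_{xx}+2u_{xx}q_y+4u_xq_{xy}+4u_{xy}q_x-q_{xxxy}$, where $q$ and its derivatives are odd (anticommuting) variables. Then the system $$w_x=2u_xq_x,\qquad w_y=q_t+q_{xxy}-2u_xq_y-2u_yq_x,$$ with $w$ odd, is compatible on $\mathcal{T}\mathcal{E}$ and thus defines a covering $\tau\colon W\to\mathcal{T}\mathcal{E}$; moreover, for every $\mu\in\mathbb{R}$, setting $\gamma=1-\mu t$, the function $$S^u=(2\gamma u_x-\mu y)q-\gamma q_{xx}+\gamma w$$ is a symmetry shadow in the composition $\mathbf{t}\circ\tau\colon W\to\mathcal{E}$, i.e. it satisfies $D_xD_tS^u-2u_{xx}D_yS^u-2u_yD_x^2S^u-4u_{xy}D_xS^u-4u_xD_xD_yS^u+D_x^3D_yS^u=0$ with total derivatives lifted to $W$.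
   Context: $\mathbf{t}\colon\mathcal{T}\mathcal{E}\to\mathcal{E}$ is the tangent covering $(u_\sigma,q_\sigma)\mapsto u_\sigma$. A covering over an equation is given by additional (nonlocal) variables with derivatives prescribed by a system whose compatibility conditions hold by virtue of the equation; total derivatives are extended accordingly (e.g. $D_x(w)=2u_xq_x$). A shadow in a covering is a solution of the lifted linearized equation. *)

theory Defs
  imports Complex_Main "HOL-Library.Poly_Mapping"
begin

text \<open>A jet index (a,b,c) means
a derivatives in t, b in x, c in y.\<close>

type_synonym jidx = "nat \<times> nat \<times> nat"

datatype var = T | X | Y | U jidx | Q jidx | W jidx

type_synonym dpoly = "(var \<Rightarrow>\<^sub>0 nat) \<Rightarrow>\<^sub>0 real"

definition V :: "var \<Rightarrow> dpoly" where
  "V v = Poly_Mapping.single (Poly_Mapping.single v 1) 1"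

definition C :: "real \<Rightarrow> dpoly" where
  "C c = Poly_Mapping.single 0 c"

abbreviation u :: "nat \<Rightarrow> nat \<Rightarrow> nat \<Rightarrow> dpoly" where "u a b c \<equiv> V (U (a,b,c))"
abbreviation q :: "nat \<Rightarrow> nat \<Rightarrow> nat \<Rightarrow> dpoly" where "q a b c \<equiv> V (Q (a,b,c))"
abbreviation w :: "nat \<Rightarrow> nat \<Rightarrow> nat \<Rightarrow> dpoly" where "w a b c \<equiv> V (W (a,b,c))"

datatype dir = Dt | Dx | Dy

fun shift :: "dir \<Rightarrow> jidx \<Rightarrow> jidx" where
  "shift Dt (a,b,c) = (Suc a, b, c)"
| "shift Dx (a,b,c) = (a, Suc b, c)"
| "shift Dy (a,b,c) = (a, b, Suc c)"

fun dvar :: "dir \<Rightarrow> var \<Rightarrow> dpoly" where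
  "dvar d T = (if d = Dt then 1 else 0)"
| "dvar d X = (if d = Dx then 1 else 0)"
| "dvar d Y = (if d = Dy then 1 else 0)"
| "dvar d (U s) = V (U (shift d s))"
| "dvar d (Q s) = V (Q (shift d s))"
| "dvar d (W s) = V (W (shift d s))"

text \<open>Total derivative D_d on the free jet space: the derivation extending dvar
(chain rule applied monomial by monomial).\<close>
definition D :: "dir \<Rightarrow> dpoly \<Rightarrow> dpoly" where
  "D d p = (\<Sum>mon\<in>Poly_Mapping.keys p. \<Sum>x\<in>Poly_Mapping.keys (mon :: var \<Rightarrow>\<^sub>0 nat).
      Poly_Mapping.single (mon - Poly_Mapping.single x 1)
         (Poly_Mapping.lookup p mon * real (Poly_Mapping.lookup mon x)) * dvar d x)"

definition Dmulti :: "jidx \<Rightarrow> dpoly \<Rightarrow> dpoly" where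
  "Dmulti s p = (case s of (a,b,c) \<Rightarrow>
      (D Dt ^^ a) ((D Dx ^^ b) ((D Dy ^^ c) p)))"

inductive_set gen_ideal :: "dpoly set \<Rightarrow> dpoly set" for G where
  zero: "0 \<in> gen_ideal G"
| step: "p \<in> gen_ideal G \<Longrightarrow> g \<in> G \<Longrightarrow> p + c * g \<in> gen_ideal G"

text \<open>Differential ideal generated by G: the ideal generated by all total
derivatives of the elements of G.  "f = 0 by virtue of the system G" means
f belongs to this ideal.\<close>
definition diff_ideal :: "dpoly set \<Rightarrow> dpoly set" where
  "diff_ideal G = gen_ideal {Dmulti s g | s g. g \<in> G}"

definition eqE :: dpoly where
  "eqE = u 1 1 0 - (2 * u 0 0 1 * u 0 2 0 + 4 * u 0 1 0 * u 0 1 1 - u 0 3 1)"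

definition eqTE :: dpoly where
  "eqTE = q 1 1 0 - (2 * u 0 0 1 * q 0 2 0 + 2 * u 0 2 0 * q 0 0 1
            + 4 * u 0 1 0 * q 0 1 1 + 4 * u 0 1 1 * q 0 1 0 - q 0 3 1)"

text \<open>Right-hand sides of the covering system w_x = A, w_y = B.\<close>
definition covA :: dpoly where
  "covA = 2 * u 0 1 0 * q 0 1 0"

definition covB :: dpoly where
  "covB = q 1 0 0 + q 0 2 1 - 2 * u 0 1 0 * q 0 0 1 - 2 * u 0 0 1 * q 0 1 0"

definition linE :: "dpoly \<Rightarrow> dpoly" where
  "linE S = D Dx (D Dt S) - 2 * u 0 2 0 * D Dy S - 2 * u 0 0 1 * D Dx (D Dx S)
           - 4 * u 0 1 1 * D Dx S - 4 * u 0 1 0 * D Dx (D Dy S)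
           + D Dx (D Dx (D Dx (D Dy S)))"

definition gam :: "real \<Rightarrow> dpoly" where
  "gam \<mu> = 1 - C \<mu> * V T"

definition Su :: "real \<Rightarrow> dpoly" where
  "Su \<mu> = (2 * gam \<mu> * u 0 1 0 - C \<mu> * V Y) * q 0 0 0 - gam \<mu> * q 0 2 0
           + gam \<mu> * w 0 0 0"

end

theory Submission
  imports Defs
begin

text \<open>The total derivatives D are derivations of the polynomial ring of jet coordinates
killing the constants.  Hence both claims reduce to polynomial identities:
D_y(2 u_x q_x) - D_x(q_t + q_xxy - 2 u_x q_y - 2 u_y q_x) is exactly minus the
tangent equation, and the linearization of S^u is an explicit combination, with
polynomial coefficients, of the equations, the covering relations and some of their
total derivatives.  All terms are linear in the odd variables q, w, so computing in the
commutative ring loses nothing.\<close>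

definition D_monom :: "dir \<Rightarrow> (var \<Rightarrow>\<^sub>0 nat) \<Rightarrow> dpoly" where
  "D_monom d m = (\<Sum>x\<in>Poly_Mapping.keys m.
      Poly_Mapping.single (m - Poly_Mapping.single x 1) (real (Poly_Mapping.lookup m x)) * dvar d x)"

lemma D_monom_eq_sum_superset:
  assumes "finite S" "Poly_Mapping.keys m \<subseteq> S"
  shows "D_monom d m = (\<Sum>x\<in>S. Poly_Mapping.single (m - Poly_Mapping.single x 1)
      (real (Poly_Mapping.lookup m x)) * dvar d x)"
  unfolding D_monom_def
  by (rule sum.mono_neutral_left) (use assms in \<open>auto simp: in_keys_iff\<close>)

lemma D_eq_sum_superset:
  assumes "finite S" "Poly_Mapping.keys p \<subseteq> S"
  shows "D d p = (\<Sum>m\<in>S. Poly_Mapping.single 0 (Poly_Mapping.lookup p m) * D_monom d m)"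
proof -
  have "D d p = (\<Sum>m\<in>Poly_Mapping.keys p.
      Poly_Mapping.single 0 (Poly_Mapping.lookup p m) * D_monom d m)"
    unfolding D_def D_monom_def
    by (simp add: sum_distrib_left mult_single mult.assoc[symmetric])
  also have "\<dots> = (\<Sum>m\<in>S. Poly_Mapping.single 0 (Poly_Mapping.lookup p m) * D_monom d m)"
    by (rule sum.mono_neutral_left) (use assms in \<open>auto simp: in_keys_iff\<close>)
  finally show ?thesis .
qed

lemma D_single: "D d (Poly_Mapping.single m c) = Poly_Mapping.single 0 c * D_monom d m"
  by (subst D_eq_sum_superset[of "{m}"]) auto

lemma D_zero [simp]: "D d 0 = 0"
  by (simp add: D_def)

lemma D_add: "D d (p + r) = D d p + D d r"
proof -
  let ?S = "Poly_Mapping.keys p \<union> Poly_Mapping.keys r"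
  have "D d (p + r) = (\<Sum>m\<in>?S. Poly_Mapping.single 0 (Poly_Mapping.lookup (p + r) m) * D_monom d m)"
    by (rule D_eq_sum_superset[OF _ keys_add]) simp
  also have "\<dots> = (\<Sum>m\<in>?S. Poly_Mapping.single 0 (Poly_Mapping.lookup p m) * D_monom d m)
     + (\<Sum>m\<in>?S. Poly_Mapping.single 0 (Poly_Mapping.lookup r m) * D_monom d m)"
    by (simp add: lookup_add single_add distrib_right sum.distrib)
  also have "\<dots> = D d p + D d r"
    by (simp add: D_eq_sum_superset[symmetric])
  finally show ?thesis .
qed

lemma D_uminus: "D d (- p) = - D d p"
  using D_add[of d "- p" p] by (simp add: eq_neg_iff_add_eq_0)

lemma D_diff: "D d (p - r) = D d p - D d r"
  using D_add[of d p "- r"] by (simp add: D_uminus)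

lemma single_diff_single_add:
  "Poly_Mapping.single (m + n - Poly_Mapping.single x 1) (real (Poly_Mapping.lookup m x))
   = Poly_Mapping.single n 1 * Poly_Mapping.single (m - Poly_Mapping.single x 1) (real (Poly_Mapping.lookup m x))"
proof (cases "Poly_Mapping.lookup m x = 0")
  case False
  have "m + n - Poly_Mapping.single x 1 = n + (m - Poly_Mapping.single x 1)"
    by (rule poly_mapping_eqI) (use False in \<open>auto simp: lookup_minus lookup_add lookup_single when_def\<close>)
  then show ?thesis by (simp add: mult_single)
qed simp

lemma D_monom_add:
  "D_monom d (m + n) = Poly_Mapping.single m 1 * D_monom d n + Poly_Mapping.single n 1 * D_monom d m"
proof -
  let ?S = "Poly_Mapping.keys m \<union> Poly_Mapping.keys n"
  have fin: "finite ?S" by simp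
  let ?term = "\<lambda>k x. Poly_Mapping.single (m + n - Poly_Mapping.single x 1)
      (real (Poly_Mapping.lookup k x)) * dvar d x"
  have "D_monom d (m + n) = (\<Sum>x\<in>?S. ?term (m + n) x)"
    by (rule D_monom_eq_sum_superset[OF fin keys_add])
  also have "\<dots> = (\<Sum>x\<in>?S. ?term m x) + (\<Sum>x\<in>?S. ?term n x)"
    by (simp add: lookup_add single_add distrib_right sum.distrib)
  also have "(\<Sum>x\<in>?S. ?term m x) = Poly_Mapping.single n 1 * D_monom d m"
    unfolding D_monom_eq_sum_superset[OF fin Un_upper1] sum_distrib_left
    by (rule sum.cong[OF refl]) (simp only: single_diff_single_add mult.assoc)
  also have "(\<Sum>x\<in>?S. ?term n x) = Poly_Mapping.single m 1 * D_monom d n"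
    unfolding D_monom_eq_sum_superset[OF fin Un_upper2] sum_distrib_left
    by (rule sum.cong[OF refl]) (simp only: add.commute[of m n] single_diff_single_add mult.assoc)
  finally show ?thesis by simp
qed

lemma D_mult_single_single:
  "D d (Poly_Mapping.single m a * Poly_Mapping.single n b)
   = Poly_Mapping.single m a * D d (Poly_Mapping.single n b)
     + Poly_Mapping.single n b * D d (Poly_Mapping.single m a)"
proof -
  have split_coeff: "Poly_Mapping.single k c = Poly_Mapping.single 0 c * Poly_Mapping.single k 1"
    for k and c :: real
    by (simp add: mult_single)
  have "D d (Poly_Mapping.single m a * Poly_Mapping.single n b)
     = Poly_Mapping.single 0 a * Poly_Mapping.single 0 b
       * (Poly_Mapping.single m 1 * D_monom d n + Poly_Mapping.single n 1 * D_monom d m)"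
    by (simp add: mult_single D_single D_monom_add)
  then show ?thesis
    unfolding D_single by (simp only: split_coeff[of m a] split_coeff[of n b]) (simp add: algebra_simps)
qed

lemma update_eq_add_single:
  "k \<notin> Poly_Mapping.keys f \<Longrightarrow> Poly_Mapping.update k c f = f + Poly_Mapping.single k c"
  by (rule poly_mapping_eqI) (auto simp: lookup_update lookup_add lookup_single in_keys_iff when_def)

lemma D_mult_single:
  "D d (Poly_Mapping.single m a * r) = Poly_Mapping.single m a * D d r + r * D d (Poly_Mapping.single m a)"
proof (induction r rule: update_induct)
  case (update f k c)
  then show ?case
    by (simp add: update_eq_add_single distrib_left distrib_right D_add D_mult_single_single algebra_simps)
qed simp

lemma D_mult: "D d (p * r) = p * D d r + r * D d p"
proof (induction p rule: update_induct)
  case (update f k c)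
  have "D d ((f + Poly_Mapping.single k c) * r)
     = (f * D d r + r * D d f) + (Poly_Mapping.single k c * D d r + r * D d (Poly_Mapping.single k c))"
    by (simp only: distrib_right D_add D_mult_single update.IH)
  then show ?case by (simp add: update_eq_add_single[OF update(1)] D_add algebra_simps)
qed simp

lemma D_V: "D d (V v) = dvar d v"
  unfolding V_def D_single D_monom_def by simp

lemma D_C: "D d (C c) = 0"
  unfolding C_def D_single D_monom_def by simp

lemma D_one: "D d 1 = 0"
  using D_C[of d 1] by (simp add: C_def)

lemma D_numeral: "D d (numeral k) = 0"
  using D_C[of d "numeral k"] by (simp add: C_def)

lemmas D_simps = D_add D_diff D_uminus D_mult D_V D_C D_one D_numeral

lemma gen_ideal_add:
  assumes "p \<in> gen_ideal G" and "r \<in> gen_ideal G"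
  shows "p + r \<in> gen_ideal G"
  using assms(2)
proof (induction r rule: gen_ideal.induct)
  case zero
  show ?case using assms(1) by simp
next
  case (step r g c)
  then show ?case using gen_ideal.step[of "p + r" G g c] by (simp add: add.assoc)
qed

lemma diff_ideal_add: "p \<in> diff_ideal G \<Longrightarrow> r \<in> diff_ideal G \<Longrightarrow> p + r \<in> diff_ideal G"
  unfolding diff_ideal_def by (rule gen_ideal_add)

lemma mult_Dmulti_in_diff_ideal:
  assumes "g \<in> G"
  shows "c * Dmulti s g \<in> diff_ideal G"
proof -
  have "Dmulti s g \<in> {Dmulti s g | s g. g \<in> G}"
    using assms by blast
  from gen_ideal.step[OF gen_ideal.zero this, of c] show ?thesis
    unfolding diff_ideal_def by simp
qed

lemma covering_compatibility: "D Dy covA - D Dx covB = - eqTE"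
  unfolding covA_def covB_def eqTE_def
  by (simp add: D_simps numeral_2_eq_2 numeral_3_eq_3 algebra_simps)

lemma linE_Su_decomposition:
  fixes \<mu> :: real
  defines "\<gamma> \<equiv> gam \<mu>"
  shows "linE (Su \<mu>) =
        (4 * \<gamma> * u 0 1 0 - C \<mu> * V Y) * Dmulti (0,0,0) eqTE
      + (4 * \<gamma> * q 0 1 0) * Dmulti (0,0,0) eqE
      + (2 * \<gamma> * q 0 0 0) * Dmulti (0,1,0) eqE
      + (- \<gamma>) * Dmulti (0,2,0) eqTE
      + \<gamma> * Dmulti (1,0,0) (w 0 1 0 - covA)
      + (- C \<mu> - 4 * \<gamma> * u 0 1 1) * Dmulti (0,0,0) (w 0 1 0 - covA)
      + (- 2 * \<gamma> * u 0 2 0) * Dmulti (0,0,0) (w 0 0 1 - covB)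
      + (- 2 * \<gamma> * u 0 0 1) * Dmulti (0,1,0) (w 0 1 0 - covA)
      + (- 4 * \<gamma> * u 0 1 0) * Dmulti (0,0,1) (w 0 1 0 - covA)
      + \<gamma> * Dmulti (0,2,1) (w 0 1 0 - covA)"
  unfolding \<gamma>_def linE_def Su_def gam_def covA_def covB_def eqTE_def eqE_def Dmulti_def
  by (simp add: D_simps numeral_2_eq_2 numeral_3_eq_3 algebra_simps)

theorem proposition4:
  shows "D Dy covA - D Dx covB \<in> diff_ideal {eqE, eqTE} \<and>
         (\<forall>\<mu>::real. linE (Su \<mu>) \<in>
            diff_ideal {eqE, eqTE, w 0 1 0 - covA, w 0 0 1 - covB})"
proof (intro conjI allI)
  show "D Dy covA - D Dx covB \<in> diff_ideal {eqE, eqTE}"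
    unfolding covering_compatibility
    using mult_Dmulti_in_diff_ideal[of eqTE "{eqE, eqTE}" "- 1" "(0,0,0)"]
    by (simp add: Dmulti_def)
next
  fix \<mu> :: real
  show "linE (Su \<mu>) \<in> diff_ideal {eqE, eqTE, w 0 1 0 - covA, w 0 0 1 - covB}"
    unfolding linE_Su_decomposition
    by (intro diff_ideal_add mult_Dmulti_in_diff_ideal) simp_all
qed

end
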